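(* Let $D=\{\vec\gamma\in\mathbb{R}^3:\gamma_3\neq0\}$ and $\vec\mu(\vec M,\vec\gamma)=\big(0,0,\frac{\vec M\cdot\vec\gamma}{\gamma_3}\big)$ on $\mathbb{R}^3\times D$. Then $\Pi_{\vec\mu}$ defines a Poisson bracket on $\mathbb{R}^3\times D$ and $C(\vec M,\vec\gamma)=\gamma_3\,(\vec M\cdot\vec\gamma)$ is a Casimir function of $\Pi_{\vec\mu}$.
   Context: Coordinates on $\mathbb{R}^6$ are $(\vec M,\vec\gamma)=(M_1,M_2,M_3,\gamma_1,\gamma_2,\gamma_3)$. For a smooth $\vec\mu=(\mu_1,\mu_2,\mu_3)$ of $(\vec M,\vec\gamma)$, $\Pi_{\vec\mu}$ is the skew-symmetric $6\times6$ matrix $$\Pi_{\vec\mu}=\begin{bmatrix}0&-M_3-\mu_3&M_2+\mu_2&0&-\gamma_3&\gamma_2\\ M_3+\mu_3&0&-M_1-\mu_1&\gamma_3&0&-\gamma_1\\ -M_2-\mu_2&M_1+\mu_1&0&-\gamma_2&\gamma_1&0\\ 0&-\gamma_3&\gamma_2&0&0&0\\ \gamma_3&0&-\gamma_1&0&0&0\\ -\gamma_2&\gamma_1&0&0&0&0\end{bmatrix},$$ it "defines a Poisson bracket" if $\{f,g\}_{\vec\mu}=(\nabla f)^T\Pi_{\vec\mu}\nabla g$ satisfies the Jacobi identity, and a Casimir function is a smooth $C$ with $\Pi_{\vec\mu}\nabla C=0$. *)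

theory Defs
  imports "HOL-Analysis.Analysis"
begin

text \<open>Points of R^6 are vectors x :: real^6 with coordinates
  M_k = x$k (k = 1,2,3) and gamma_k = x$(k+3) (k = 1,2,3), i.e. x$4, x$5, x$6.
  (In the numeral type 6 the index 6 coincides with 0.)\<close>

definition Mc :: "real^6 \<Rightarrow> real^3" where
  "Mc x = vector [x$1, x$2, x$3]"

definition gc :: "real^6 \<Rightarrow> real^3" where
  "gc x = vector [x$4, x$5, x$6]"

definition partial :: "'n::finite \<Rightarrow> (real^'n \<Rightarrow> real) \<Rightarrow> real^'n \<Rightarrow> real" where
  "partial i f x = deriv (\<lambda>t. f (x + t *\<^sub>R axis i 1)) 0"

definition grad :: "(real^'n::finite \<Rightarrow> real) \<Rightarrow> real^'n \<Rightarrow> real^'n" where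
  "grad f x = (\<chi> i. partial i f x)"

fun Ck_on :: "nat \<Rightarrow> (real^'n::finite) set \<Rightarrow> (real^'n \<Rightarrow> real) \<Rightarrow> bool" where
  "Ck_on 0 U f = continuous_on U f"
| "Ck_on (Suc k) U f = (continuous_on U f \<and>
     (\<forall>i. (\<forall>x\<in>U. (\<lambda>t. f (x + t *\<^sub>R axis i 1)) differentiable (at 0))
          \<and> Ck_on k U (partial i f)))"

definition smooth_on :: "(real^'n::finite) set \<Rightarrow> (real^'n \<Rightarrow> real) \<Rightarrow> bool" where
  "smooth_on U f = (\<forall>k. Ck_on k U f)"

definition PiMat :: "(real^6 \<Rightarrow> real^3) \<Rightarrow> real^6 \<Rightarrow> real^6^6" where
  "PiMat mu x = (let M = Mc x; g = gc x; m = mu x in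
     vector [
       vector [0, -(M$3) - m$3, M$2 + m$2, 0, -(g$3), g$2],
       vector [M$3 + m$3, 0, -(M$1) - m$1, g$3, 0, -(g$1)],
       vector [-(M$2) - m$2, M$1 + m$1, 0, -(g$2), g$1, 0],
       vector [0, -(g$3), g$2, 0, 0, 0],
       vector [g$3, 0, -(g$1), 0, 0, 0],
       vector [-(g$2), g$1, 0, 0, 0, 0]])"

definition pbracket :: "(real^6 \<Rightarrow> real^3) \<Rightarrow> (real^6 \<Rightarrow> real) \<Rightarrow> (real^6 \<Rightarrow> real) \<Rightarrow> real^6 \<Rightarrow> real" where
  "pbracket mu f g x = grad f x \<bullet> (PiMat mu x *v grad g x)"

definition is_poisson_on :: "(real^6) set \<Rightarrow> (real^6 \<Rightarrow> real^3) \<Rightarrow> bool" where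
  "is_poisson_on U mu = (\<forall>f g h. smooth_on U f \<and> smooth_on U g \<and> smooth_on U h \<longrightarrow>
     (\<forall>x\<in>U. pbracket mu f (pbracket mu g h) x + pbracket mu g (pbracket mu h f) x
             + pbracket mu h (pbracket mu f g) x = 0))"

definition is_casimir_on :: "(real^6) set \<Rightarrow> (real^6 \<Rightarrow> real^3) \<Rightarrow> (real^6 \<Rightarrow> real) \<Rightarrow> bool" where
  "is_casimir_on U mu C = (smooth_on U C \<and> (\<forall>x\<in>U. PiMat mu x *v grad C x = 0))"

end

theory Submission
  imports Defs
begin

(* Writing the bracket in coordinates, {g,h} = sum_ab g_a Pi_ab h_b, the product rule gives
   d_j{g,h} = sum_ab (g_ja Pi_ab h_b + g_a (d_j Pi_ab) h_b + g_a Pi_ab h_jb).  Inserting this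
   into the cyclic sum of {f,{g,h}}, the terms containing second derivatives cancel in pairs,
   because Pi is skew-symmetric and mixed partials commute (Schwarz).  What remains is
   sum f_i g_a h_b (S_iab + S_abi + S_bia) with the Schouten tensor S_iab = sum_j Pi_ij d_j Pi_ab.
   Hence, for ANY mu: Jacobi holds at a point as soon as the cyclic sum of S vanishes there. *)

lemma exhaust_6: fixes x :: 6 shows "x = 1 \<or> x = 2 \<or> x = 3 \<or> x = 4 \<or> x = 5 \<or> x = 6"
proof (induct x)
  case (of_int z)
  then have "z = 0 \<or> z = 1 \<or> z = 2 \<or> z = 3 \<or> z = 4 \<or> z = 5" by fastforce
  then show ?case by auto
qed

lemma sum_6: "sum F (UNIV::6 set) = F 1 + F 2 + F 3 + F 4 + F 5 + F 6"
proof -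
  have UNIV_6: "(UNIV::6 set) = {1,2,3,4,5,6}" using exhaust_6 by auto
  show ?thesis unfolding UNIV_6 by (simp add: add.assoc)
qed

lemma forall_6: "(\<forall>i::6. P i) \<longleftrightarrow> P 1 \<and> P 2 \<and> P 3 \<and> P 4 \<and> P 5 \<and> P 6"
  by (metis exhaust_6)

section \<open>Calculus along coordinate axes\<close>

lemma coord_deriv: "((\<lambda>t. (x + t *\<^sub>R v) $ k) has_real_derivative v $ k) (at 0)"
proof -
  have "(\<lambda>t. (x + t *\<^sub>R v) $ k) = (\<lambda>t. x $ k + t * v $ k)" by simp
  moreover have "((\<lambda>t. x $ k + t * v $ k) has_real_derivative v $ k) (at 0)"
    by (auto intro!: derivative_eq_intros)
  ultimately show ?thesis by simp
qed

lemma partial_has_deriv: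
  assumes "(\<lambda>t. f (y + t *\<^sub>R axis k 1)) differentiable (at 0)"
  shows "((\<lambda>t. f (y + t *\<^sub>R axis k 1)) has_real_derivative partial k f y) (at 0)"
  using assms unfolding partial_def by (simp add: DERIV_deriv_iff_real_differentiable)

lemma C2_partials:
  fixes g :: "real^'n::finite \<Rightarrow> real"
  assumes "Ck_on 2 U g"
  shows "\<And>y i. y \<in> U \<Longrightarrow> ((\<lambda>t. g (y + t *\<^sub>R axis i 1)) has_real_derivative partial i g y) (at 0)"
    and "\<And>y i j. y \<in> U \<Longrightarrow>
           ((\<lambda>t. partial i g (y + t *\<^sub>R axis j 1)) has_real_derivative partial j (partial i g) y) (at 0)"
    and "\<And>i j. continuous_on U (partial j (partial i g))"
  using assms by (auto simp: numeral_2_eq_2 intro!: partial_has_deriv)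

lemma mixed_mvt:
  fixes g gu guv :: "'a::real_normed_vector \<Rightarrow> real"
  assumes du: "\<And>y. y \<in> U \<Longrightarrow> ((\<lambda>t. g (y + t *\<^sub>R u)) has_real_derivative gu y) (at 0)"
      and dv: "\<And>y. y \<in> U \<Longrightarrow> ((\<lambda>t. gu (y + t *\<^sub>R v)) has_real_derivative guv y) (at 0)"
      and h: "0 < h"
      and inU: "\<And>s t. 0 \<le> s \<Longrightarrow> s \<le> h \<Longrightarrow> 0 \<le> t \<Longrightarrow> t \<le> h \<Longrightarrow> x + s *\<^sub>R u + t *\<^sub>R v \<in> U"
  shows "\<exists>s t. 0 < s \<and> s < h \<and> 0 < t \<and> t < h \<and>
     g (x + h *\<^sub>R u + h *\<^sub>R v) - g (x + h *\<^sub>R u) - g (x + h *\<^sub>R v) + g x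
       = h * h * guv (x + s *\<^sub>R u + t *\<^sub>R v)"
proof -
  have shift: "((\<lambda>r. F (z + r *\<^sub>R w)) has_real_derivative D) (at s)"
    if "((\<lambda>t. F (y + t *\<^sub>R w)) has_real_derivative D) (at 0)" "y = z + s *\<^sub>R w"
    for F :: "'a \<Rightarrow> real" and y z w s D
  proof -
    have "(\<lambda>t. F (y + t *\<^sub>R w)) = (\<lambda>t. (\<lambda>r. F (z + r *\<^sub>R w)) (t + s))"
      using that(2) by (simp add: algebra_simps scaleR_add_left)
    then show ?thesis using that(1) DERIV_shift[of "\<lambda>r. F (z + r *\<^sub>R w)" D 0 s] by simp
  qed
  define A where "A s = g (x + h *\<^sub>R v + s *\<^sub>R u) - g (x + s *\<^sub>R u)" for s
  have "DERIV A s :> gu (x + s *\<^sub>R u + h *\<^sub>R v) - gu (x + s *\<^sub>R u)" if "0 \<le> s" "s \<le> h" for s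
  proof -
    have "((\<lambda>r. g (x + h *\<^sub>R v + r *\<^sub>R u)) has_real_derivative gu (x + s *\<^sub>R u + h *\<^sub>R v)) (at s)"
      by (rule shift[OF du]) (use inU[of s h] that h in \<open>auto simp: algebra_simps\<close>)
    moreover have "((\<lambda>r. g (x + r *\<^sub>R u)) has_real_derivative gu (x + s *\<^sub>R u)) (at s)"
      by (rule shift[OF du]) (use inU[of s 0] that h in auto)
    ultimately show ?thesis unfolding A_def[abs_def] by (rule DERIV_diff)
  qed
  then obtain s where s: "0 < s" "s < h"
      "A h - A 0 = (h - 0) * (gu (x + s *\<^sub>R u + h *\<^sub>R v) - gu (x + s *\<^sub>R u))"
    using MVT2[OF h, of A "\<lambda>s. gu (x + s *\<^sub>R u + h *\<^sub>R v) - gu (x + s *\<^sub>R u)"] by auto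
  define B where "B t = gu (x + s *\<^sub>R u + t *\<^sub>R v)" for t
  have "DERIV B t :> guv (x + s *\<^sub>R u + t *\<^sub>R v)" if "0 \<le> t" "t \<le> h" for t
    unfolding B_def by (rule shift[OF dv]) (use inU[of s t] that s in auto)
  then obtain t where t: "0 < t" "t < h" "B h - B 0 = (h - 0) * guv (x + s *\<^sub>R u + t *\<^sub>R v)"
    using MVT2[OF h, of B "\<lambda>t. guv (x + s *\<^sub>R u + t *\<^sub>R v)"] by auto
  have "g (x + h *\<^sub>R u + h *\<^sub>R v) - g (x + h *\<^sub>R u) - g (x + h *\<^sub>R v) + g x = A h - A 0"
    by (simp add: A_def algebra_simps)
  also have "\<dots> = h * (B h - B 0)" using s(3) by (simp add: B_def)
  also have "\<dots> = h * h * guv (x + s *\<^sub>R u + t *\<^sub>R v)" using t(3) by simp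
  finally show ?thesis using s t by blast
qed

text \<open>Arbitrarily close to \<open>x\<close> the two mixed partials take a common value: both equal
  the same second difference quotient at (different) intermediate points.\<close>

lemma mixed_partials_agree_nearby:
  fixes g :: "real^'n::finite \<Rightarrow> real"
  assumes U: "open U" and x: "x \<in> U" and g: "Ck_on 2 U g" and \<delta>: "\<delta> > 0"
  shows "\<exists>p q. p \<in> U \<and> q \<in> U \<and> dist p x < \<delta> \<and> dist q x < \<delta> \<and>
           partial i (partial j g) p = partial j (partial i g) q"
proof -
  obtain r where r: "r > 0" "ball x r \<subseteq> U" using U x open_contains_ball by blast
  define h where "h = min r \<delta> / 3"
  have h: "h > 0" using r \<delta> by (simp add: h_def)
  have close: "dist (x + s *\<^sub>R axis a 1 + t *\<^sub>R axis b 1) x < min r \<delta>"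
    if "0 \<le> s" "s \<le> h" "0 \<le> t" "t \<le> h" for s t a b
  proof -
    have "dist (x + s *\<^sub>R axis a 1 + t *\<^sub>R axis b 1) x = norm (s *\<^sub>R axis a (1::real) + t *\<^sub>R axis b 1)"
      by (simp add: dist_norm)
    also have "\<dots> \<le> norm (s *\<^sub>R axis a (1::real)) + norm (t *\<^sub>R axis b (1::real))"
      by (rule norm_triangle_ineq)
    also have "\<dots> \<le> 2 * h" using that by simp
    finally show ?thesis using h unfolding h_def by linarith
  qed
  have inU: "x + s *\<^sub>R axis a 1 + t *\<^sub>R axis b 1 \<in> U"
    if "0 \<le> s" "s \<le> h" "0 \<le> t" "t \<le> h" for s t a b
    using close[OF that, of a b] r(2) by (auto simp: dist_commute)
  obtain s1 t1 where st1: "0 < s1" "s1 < h" "0 < t1" "t1 < h"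
    "g (x + h *\<^sub>R axis j 1 + h *\<^sub>R axis i 1) - g (x + h *\<^sub>R axis j 1) - g (x + h *\<^sub>R axis i 1) + g x
      = h * h * partial i (partial j g) (x + s1 *\<^sub>R axis j 1 + t1 *\<^sub>R axis i 1)"
    using mixed_mvt[of U g "axis j 1" "partial j g" "axis i 1" "partial i (partial j g)" h x]
      C2_partials(1,2)[OF g] h inU by blast
  obtain s2 t2 where st2: "0 < s2" "s2 < h" "0 < t2" "t2 < h"
    "g (x + h *\<^sub>R axis i 1 + h *\<^sub>R axis j 1) - g (x + h *\<^sub>R axis i 1) - g (x + h *\<^sub>R axis j 1) + g x
      = h * h * partial j (partial i g) (x + s2 *\<^sub>R axis i 1 + t2 *\<^sub>R axis j 1)"
    using mixed_mvt[of U g "axis i 1" "partial i g" "axis j 1" "partial j (partial i g)" h x]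
      C2_partials(1,2)[OF g] h inU by blast
  have comm: "x + h *\<^sub>R axis j 1 + h *\<^sub>R axis i 1 = x + h *\<^sub>R axis i 1 + h *\<^sub>R axis j 1"
    by (simp add: algebra_simps)
  have "h * h * partial i (partial j g) (x + s1 *\<^sub>R axis j 1 + t1 *\<^sub>R axis i 1)
       = h * h * partial j (partial i g) (x + s2 *\<^sub>R axis i 1 + t2 *\<^sub>R axis j 1)"
    using st1(5) st2(5) unfolding comm by linarith
  then have "partial i (partial j g) (x + s1 *\<^sub>R axis j 1 + t1 *\<^sub>R axis i 1)
       = partial j (partial i g) (x + s2 *\<^sub>R axis i 1 + t2 *\<^sub>R axis j 1)"
    using h by simp
  moreover have "dist (x + s1 *\<^sub>R axis j 1 + t1 *\<^sub>R axis i 1) x < \<delta>"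
    "dist (x + s2 *\<^sub>R axis i 1 + t2 *\<^sub>R axis j 1) x < \<delta>"
    using close[of s1 t1 j i] close[of s2 t2 i j] st1(1-4) st2(1-4) by auto
  ultimately show ?thesis using inU st1(1-4) st2(1-4) by (meson less_imp_le)
qed

text \<open>Schwarz's theorem: mixed partials of a \<open>C\<^sup>2\<close> function on an open set commute,
  by continuity of both mixed partials at \<open>x\<close>.\<close>

lemma partials_commute:
  fixes g :: "real^'n::finite \<Rightarrow> real"
  assumes U: "open U" and x: "x \<in> U" and g: "Ck_on 2 U g"
  shows "partial i (partial j g) x = partial j (partial i g) x"
proof (rule ccontr)
  define D1 where "D1 = partial i (partial j g) x"
  define D2 where "D2 = partial j (partial i g) x"
  define e where "e = \<bar>D1 - D2\<bar> / 2"
  assume "partial i (partial j g) x \<noteq> partial j (partial i g) x"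
  then have e: "e > 0" by (simp add: e_def D1_def D2_def)
  obtain d1 where d1: "d1 > 0" "\<And>y. y \<in> U \<Longrightarrow> dist y x < d1 \<Longrightarrow> dist (partial i (partial j g) y) D1 < e"
    using C2_partials(3)[OF g] x e unfolding continuous_on_iff D1_def by metis
  obtain d2 where d2: "d2 > 0" "\<And>y. y \<in> U \<Longrightarrow> dist y x < d2 \<Longrightarrow> dist (partial j (partial i g) y) D2 < e"
    using C2_partials(3)[OF g] x e unfolding continuous_on_iff D2_def by metis
  obtain p q where pq: "p \<in> U" "q \<in> U" "dist p x < min d1 d2" "dist q x < min d1 d2"
      "partial i (partial j g) p = partial j (partial i g) q"
    using mixed_partials_agree_nearby[OF U x g, of "min d1 d2" i j] d1(1) d2(1) by auto
  have "dist (partial i (partial j g) p) D1 < e" "dist (partial j (partial i g) q) D2 < e"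
    using d1(2) d2(2) pq(1-4) by auto
  then show False using pq(5) unfolding e_def dist_real_def by (simp add: abs_if split: if_splits)
qed

section \<open>Polynomial functions are smooth\<close>

inductive polyf :: "(real^'n::finite \<Rightarrow> real) \<Rightarrow> bool" where
  pconst: "polyf (\<lambda>y. c)"
| pcoord: "polyf (\<lambda>y. y $ k)"
| padd: "polyf f \<Longrightarrow> polyf g \<Longrightarrow> polyf (\<lambda>y. f y + g y)"
| pmult: "polyf f \<Longrightarrow> polyf g \<Longrightarrow> polyf (\<lambda>y. f y * g y)"

lemma polyf_deriv:
  "polyf f \<Longrightarrow> \<exists>f'. polyf f' \<and> (\<forall>y. ((\<lambda>t. f (y + t *\<^sub>R axis i 1)) has_real_derivative f' y) (at 0))"
proof (induction rule: polyf.induct)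
  case (pconst c)
  then show ?case by (intro exI[of _ "\<lambda>y. 0"]) (auto intro: polyf.pconst)
next
  case (pcoord k)
  then show ?case by (intro exI[of _ "\<lambda>y. axis i 1 $ k"] conjI allI polyf.pconst coord_deriv)
next
  case (padd f g)
  then obtain f' g' where "polyf f'" "\<forall>y. ((\<lambda>t. f (y + t *\<^sub>R axis i 1)) has_real_derivative f' y) (at 0)"
    "polyf g'" "\<forall>y. ((\<lambda>t. g (y + t *\<^sub>R axis i 1)) has_real_derivative g' y) (at 0)" by blast
  then show ?case by (intro exI[of _ "\<lambda>y. f' y + g' y"]) (auto intro: polyf.padd DERIV_add)
next
  case (pmult f g)
  then obtain f' g' where d: "polyf f'" "\<forall>y. ((\<lambda>t. f (y + t *\<^sub>R axis i 1)) has_real_derivative f' y) (at 0)"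
    "polyf g'" "\<forall>y. ((\<lambda>t. g (y + t *\<^sub>R axis i 1)) has_real_derivative g' y) (at 0)" by blast
  have "((\<lambda>t. f (y + t *\<^sub>R axis i 1) * g (y + t *\<^sub>R axis i 1)) has_real_derivative f' y * g y + g' y * f y) (at 0)" for y
    using DERIV_mult[OF d(2)[rule_format, of y] d(4)[rule_format, of y]] by simp
  moreover have "polyf (\<lambda>y. f' y * g y + g' y * f y)"
    using d pmult.hyps by (intro polyf.padd polyf.pmult)
  ultimately show ?case by blast
qed

lemma polyf_Ck: "polyf f \<Longrightarrow> Ck_on k U f"
proof (induction k arbitrary: f)
  case 0
  have "continuous_on U f" using "0" by (induction rule: polyf.induct) (auto intro!: continuous_intros)
  then show ?case by simp
next
  case (Suc k)
  have "(\<forall>x\<in>U. (\<lambda>t. f (x + t *\<^sub>R axis i 1)) differentiable (at 0)) \<and> Ck_on k U (partial i f)" for i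
  proof -
    obtain f' where f': "polyf f'" "\<forall>y. ((\<lambda>t. f (y + t *\<^sub>R axis i 1)) has_real_derivative f' y) (at 0)"
      using polyf_deriv[OF Suc.prems] by blast
    have "partial i f = f'" unfolding partial_def using f'(2) by (auto intro!: DERIV_imp_deriv)
    moreover have "(\<lambda>t. f (x + t *\<^sub>R axis i 1)) differentiable (at 0)" for x
      using f'(2) real_differentiable_def by blast
    ultimately show ?thesis using Suc.IH[OF f'(1)] by simp
  qed
  moreover have "continuous_on U f" using Suc.IH[OF Suc.prems] by (cases k) auto
  ultimately show ?case by simp
qed


section \<open>The Jacobi identity from the Schouten condition\<close>

lemma PiMat_skew: "PiMat mu x $ a $ b = - (PiMat mu x $ b $ a)"
  using exhaust_6[of a] exhaust_6[of b]
  by (elim disjE) (simp_all add: PiMat_def Let_def vector_def)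

lemma pbracket_sum:
  "pbracket mu f g y = (\<Sum>a\<in>UNIV. \<Sum>b\<in>UNIV. partial a f y * PiMat mu y $ a $ b * partial b g y)"
  unfolding pbracket_def grad_def inner_vec_def matrix_vector_mult_def
  by (simp add: sum_distrib_left algebra_simps)


text \<open>For a matrix field with value \<open>P\<close> and axis derivatives \<open>dP j\<close> at a point, and functions
  with first derivatives \<open>u\<close>, \<open>v\<close> and second derivatives \<open>u2\<close>, \<open>v2\<close> there, \<open>dbracket\<close> is the
  \<open>j\<close>-th partial derivative of the bracket, computed by the product rule.\<close>

definition dbracket :: "('n::finite \<Rightarrow> 'n \<Rightarrow> real) \<Rightarrow> ('n \<Rightarrow> 'n \<Rightarrow> 'n \<Rightarrow> real) \<Rightarrow> ('n \<Rightarrow> real)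
   \<Rightarrow> ('n \<Rightarrow> 'n \<Rightarrow> real) \<Rightarrow> ('n \<Rightarrow> real) \<Rightarrow> ('n \<Rightarrow> 'n \<Rightarrow> real) \<Rightarrow> 'n \<Rightarrow> real" where
  "dbracket P dP u u2 v v2 j =
     (\<Sum>a\<in>UNIV. \<Sum>b\<in>UNIV. u2 j a * P a b * v b + u a * dP j a b * v b + u a * P a b * v2 j b)"

text \<open>The Schouten tensor \<open>S\<^sub>i\<^sub>a\<^sub>b = \<Sum>\<^sub>j P\<^sub>i\<^sub>j \<partial>\<^sub>j P\<^sub>a\<^sub>b\<close>; the bracket satisfies Jacobi iff
  its cyclic sum in \<open>i, a, b\<close> vanishes.\<close>

definition schouten :: "('n::finite \<Rightarrow> 'n \<Rightarrow> real) \<Rightarrow> ('n \<Rightarrow> 'n \<Rightarrow> 'n \<Rightarrow> real) \<Rightarrow> 'n \<Rightarrow> 'n \<Rightarrow> 'n \<Rightarrow> real" where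
  "schouten P dP i a b = (\<Sum>j\<in>UNIV. P i j * dP j a b)"

lemma sum_rotate3_last:
  fixes Z :: "'n::finite \<Rightarrow> 'n \<Rightarrow> 'n \<Rightarrow> real"
  shows "(\<Sum>i\<in>UNIV. \<Sum>a\<in>UNIV. \<Sum>b\<in>UNIV. Z i a b) = (\<Sum>b\<in>UNIV. \<Sum>i\<in>UNIV. \<Sum>a\<in>UNIV. Z i a b)"
proof -
  have "(\<Sum>i\<in>UNIV. \<Sum>a\<in>UNIV. \<Sum>b\<in>UNIV. Z i a b) = (\<Sum>i\<in>UNIV. \<Sum>b\<in>UNIV. \<Sum>a\<in>UNIV. Z i a b)"
    by (rule sum.cong[OF refl], rule sum.swap)
  also have "\<dots> = (\<Sum>b\<in>UNIV. \<Sum>i\<in>UNIV. \<Sum>a\<in>UNIV. Z i a b)" by (rule sum.swap)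
  finally show ?thesis .
qed

lemma sum_rotate3_first:
  fixes Z :: "'n::finite \<Rightarrow> 'n \<Rightarrow> 'n \<Rightarrow> real"
  shows "(\<Sum>i\<in>UNIV. \<Sum>a\<in>UNIV. \<Sum>b\<in>UNIV. Z i a b) = (\<Sum>a\<in>UNIV. \<Sum>b\<in>UNIV. \<Sum>i\<in>UNIV. Z i a b)"
  by (rule sum_rotate3_last[of "\<lambda>a b i. Z i a b", symmetric])

lemma sum_reorder4:
  fixes Y :: "'n::finite \<Rightarrow> 'n \<Rightarrow> 'n \<Rightarrow> 'n \<Rightarrow> real"
  shows "(\<Sum>b\<in>UNIV. \<Sum>a\<in>UNIV. \<Sum>i\<in>UNIV. \<Sum>k\<in>UNIV. Y b a i k)
       = (\<Sum>i\<in>UNIV. \<Sum>k\<in>UNIV. \<Sum>a\<in>UNIV. \<Sum>b\<in>UNIV. Y b a i k)"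
proof -
  have "(\<Sum>b\<in>UNIV. \<Sum>a\<in>UNIV. \<Sum>i\<in>UNIV. \<Sum>k\<in>UNIV. Y b a i k)
      = (\<Sum>b\<in>UNIV. \<Sum>i\<in>UNIV. \<Sum>k\<in>UNIV. \<Sum>a\<in>UNIV. Y b a i k)"
    by (rule sum.cong[OF refl], rule sum_rotate3_first)
  also have "\<dots> = (\<Sum>i\<in>UNIV. \<Sum>k\<in>UNIV. \<Sum>b\<in>UNIV. \<Sum>a\<in>UNIV. Y b a i k)"
    by (rule sum_rotate3_first)
  also have "\<dots> = (\<Sum>i\<in>UNIV. \<Sum>k\<in>UNIV. \<Sum>a\<in>UNIV. \<Sum>b\<in>UNIV. Y b a i k)"
    by (rule sum.cong[OF refl], rule sum.cong[OF refl], rule sum.swap)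
  finally show ?thesis .
qed

lemma nested_bracket_expand:
  fixes P :: "'n::finite \<Rightarrow> 'n \<Rightarrow> real"
  shows "(\<Sum>i\<in>UNIV. \<Sum>j\<in>UNIV. f i * P i j * dbracket P dP u u2 v v2 j)
    = (\<Sum>i\<in>UNIV. \<Sum>j\<in>UNIV. \<Sum>a\<in>UNIV. \<Sum>b\<in>UNIV. f i * P i j * (u2 j a * P a b * v b))
    + (\<Sum>i\<in>UNIV. \<Sum>a\<in>UNIV. \<Sum>b\<in>UNIV. f i * u a * v b * schouten P dP i a b)
    + (\<Sum>i\<in>UNIV. \<Sum>j\<in>UNIV. \<Sum>a\<in>UNIV. \<Sum>b\<in>UNIV. f i * P i j * (u a * P a b * v2 j b))"
proof -
  have "(\<Sum>i\<in>UNIV. \<Sum>j\<in>UNIV. \<Sum>a\<in>UNIV. \<Sum>b\<in>UNIV. f i * P i j * (u a * dP j a b * v b))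
      = (\<Sum>i\<in>UNIV. \<Sum>a\<in>UNIV. \<Sum>b\<in>UNIV. \<Sum>j\<in>UNIV. f i * P i j * (u a * dP j a b * v b))"
    by (rule sum.cong[OF refl], rule sum_rotate3_first)
  also have "\<dots> = (\<Sum>i\<in>UNIV. \<Sum>a\<in>UNIV. \<Sum>b\<in>UNIV. f i * u a * v b * schouten P dP i a b)"
    by (simp add: schouten_def sum_distrib_left algebra_simps)
  finally show ?thesis
    by (simp add: dbracket_def sum_distrib_left sum.distrib distrib_left)
qed

text \<open>A second-order term of \<open>{f,{g,h}}\<close> cancels against one of \<open>{h,{f,g}}\<close> when \<open>P\<close> is
  skew and the Hessian \<open>H\<close> of \<open>g\<close> is symmetric.\<close>

lemma second_order_terms_cancel:
  fixes P H :: "'n::finite \<Rightarrow> 'n \<Rightarrow> real" and u v :: "'n \<Rightarrow> real"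
  assumes skew: "\<And>a b. P a b = - P b a" and sym: "\<And>a b. H a b = H b a"
  shows "(\<Sum>i\<in>UNIV. \<Sum>j\<in>UNIV. \<Sum>a\<in>UNIV. \<Sum>b\<in>UNIV. u i * P i j * (H j a * P a b * v b))
       + (\<Sum>i\<in>UNIV. \<Sum>j\<in>UNIV. \<Sum>a\<in>UNIV. \<Sum>b\<in>UNIV. v i * P i j * (u a * P a b * H j b)) = 0"
proof -
  have "(\<Sum>i\<in>UNIV. \<Sum>j\<in>UNIV. \<Sum>a\<in>UNIV. \<Sum>b\<in>UNIV. v i * P i j * (u a * P a b * H j b))
     = (\<Sum>i\<in>UNIV. \<Sum>k\<in>UNIV. \<Sum>a\<in>UNIV. \<Sum>b\<in>UNIV. v b * P b a * (u i * P i k * H a k))"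
    by (rule sum_reorder4)
  also have "\<dots> = - (\<Sum>i\<in>UNIV. \<Sum>k\<in>UNIV. \<Sum>a\<in>UNIV. \<Sum>b\<in>UNIV. u i * P i k * (H k a * P a b * v b))"
  proof -
    have "v b * P b a * (u i * P i k * H a k) = - (u i * P i k * (H k a * P a b * v b))" for i k a b
      using skew[of b a] sym[of a k] by simp
    then show ?thesis by (simp add: sum_negf[symmetric])
  qed
  finally show ?thesis by simp
qed

lemma jacobi_from_schouten:
  fixes P :: "'n::finite \<Rightarrow> 'n \<Rightarrow> real" and dP :: "'n \<Rightarrow> 'n \<Rightarrow> 'n \<Rightarrow> real"
    and f g h :: "'n \<Rightarrow> real" and f2 g2 h2 :: "'n \<Rightarrow> 'n \<Rightarrow> real"
  assumes skew: "\<And>a b. P a b = - P b a"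
    and sf: "\<And>a b. f2 a b = f2 b a" and sg: "\<And>a b. g2 a b = g2 b a" and sh: "\<And>a b. h2 a b = h2 b a"
    and cyclic: "\<And>i a b. schouten P dP i a b + schouten P dP a b i + schouten P dP b i a = 0"
  shows "(\<Sum>i\<in>UNIV. \<Sum>j\<in>UNIV. f i * P i j * dbracket P dP g g2 h h2 j)
       + (\<Sum>i\<in>UNIV. \<Sum>j\<in>UNIV. g i * P i j * dbracket P dP h h2 f f2 j)
       + (\<Sum>i\<in>UNIV. \<Sum>j\<in>UNIV. h i * P i j * dbracket P dP f f2 g g2 j) = 0"
proof -
  have "(\<Sum>i\<in>UNIV. \<Sum>a\<in>UNIV. \<Sum>b\<in>UNIV. f i * g a * h b * schouten P dP i a b)
     + (\<Sum>i\<in>UNIV. \<Sum>a\<in>UNIV. \<Sum>b\<in>UNIV. g i * h a * f b * schouten P dP i a b)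
     + (\<Sum>i\<in>UNIV. \<Sum>a\<in>UNIV. \<Sum>b\<in>UNIV. h i * f a * g b * schouten P dP i a b)
     = (\<Sum>i\<in>UNIV. \<Sum>a\<in>UNIV. \<Sum>b\<in>UNIV. f i * g a * h b * schouten P dP i a b)
     + (\<Sum>b\<in>UNIV. \<Sum>i\<in>UNIV. \<Sum>a\<in>UNIV. g i * h a * f b * schouten P dP i a b)
     + (\<Sum>a\<in>UNIV. \<Sum>b\<in>UNIV. \<Sum>i\<in>UNIV. h i * f a * g b * schouten P dP i a b)"
    by (simp only: sum_rotate3_last[of "\<lambda>i a b. g i * h a * f b * schouten P dP i a b"]
        sum_rotate3_first[of "\<lambda>i a b. h i * f a * g b * schouten P dP i a b"])
  also have "\<dots> = (\<Sum>x\<in>UNIV. \<Sum>y\<in>UNIV. \<Sum>z\<in>UNIV. f x * g y * h z *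
          (schouten P dP x y z + schouten P dP y z x + schouten P dP z x y))"
    by (simp add: sum.distrib algebra_simps)
  also have "\<dots> = 0" by (simp add: cyclic)
  finally show ?thesis
    unfolding nested_bracket_expand
    using second_order_terms_cancel[OF skew sg, where u = f and v = h] second_order_terms_cancel[OF skew sh, where u = g and v = f]
      second_order_terms_cancel[OF skew sf, where u = h and v = g]
    by (simp add: algebra_simps)
qed

lemma pbracket_deriv:
  assumes x: "x \<in> U" and g: "Ck_on 2 U g" and h: "Ck_on 2 U h"
    and dPi: "\<And>a b. ((\<lambda>t. PiMat mu (x + t *\<^sub>R axis j 1) $ a $ b) has_real_derivative dP j a b) (at 0)"
  shows "((\<lambda>t. pbracket mu g h (x + t *\<^sub>R axis j 1)) has_real_derivative
     dbracket (\<lambda>a b. PiMat mu x $ a $ b) dP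
       (\<lambda>a. partial a g x) (\<lambda>j a. partial j (partial a g) x)
       (\<lambda>a. partial a h x) (\<lambda>j a. partial j (partial a h) x) j) (at 0)"
proof -
  have "((\<lambda>t. \<Sum>a\<in>UNIV. \<Sum>b\<in>UNIV. partial a g (x + t *\<^sub>R axis j 1) * PiMat mu (x + t *\<^sub>R axis j 1) $ a $ b
                                     * partial b h (x + t *\<^sub>R axis j 1))
     has_real_derivative (\<Sum>a\<in>UNIV. \<Sum>b\<in>UNIV.
        (partial j (partial a g) x * PiMat mu (x + 0 *\<^sub>R axis j 1) $ a $ b
           + dP j a b * partial a g (x + 0 *\<^sub>R axis j 1)) * partial b h (x + 0 *\<^sub>R axis j 1)
        + partial j (partial b h) x * (partial a g (x + 0 *\<^sub>R axis j 1) * PiMat mu (x + 0 *\<^sub>R axis j 1) $ a $ b)))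
     (at 0)"
    by (intro DERIV_sum DERIV_mult dPi C2_partials(2)[OF g x] C2_partials(2)[OF h x])
  then show ?thesis unfolding pbracket_sum dbracket_def by (simp add: algebra_simps)
qed

lemma jacobi_at_point:
  assumes U: "open U" and x: "x \<in> U"
    and f: "Ck_on 2 U f" and g: "Ck_on 2 U g" and h: "Ck_on 2 U h"
    and dPi: "\<And>j a b. ((\<lambda>t. PiMat mu (x + t *\<^sub>R axis j 1) $ a $ b) has_real_derivative dP j a b) (at 0)"
    and cyclic: "\<And>i a b. schouten (\<lambda>a b. PiMat mu x $ a $ b) dP i a b
          + schouten (\<lambda>a b. PiMat mu x $ a $ b) dP a b i + schouten (\<lambda>a b. PiMat mu x $ a $ b) dP b i a = 0"
  shows "pbracket mu f (pbracket mu g h) x + pbracket mu g (pbracket mu h f) x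
         + pbracket mu h (pbracket mu f g) x = 0"
proof -
  define P where "P = (\<lambda>a b. PiMat mu x $ a $ b)"
  define D1 where "D1 F = (\<lambda>a. partial a F x)" for F :: "real^6 \<Rightarrow> real"
  define D2 where "D2 F = (\<lambda>j a. partial j (partial a F) x)" for F :: "real^6 \<Rightarrow> real"
  have nested: "pbracket mu F (pbracket mu G H) x
      = (\<Sum>i\<in>UNIV. \<Sum>j\<in>UNIV. D1 F i * P i j * dbracket P dP (D1 G) (D2 G) (D1 H) (D2 H) j)"
    if "Ck_on 2 U G" "Ck_on 2 U H" for F G H
  proof -
    have "partial j (pbracket mu G H) x = dbracket P dP (D1 G) (D2 G) (D1 H) (D2 H) j" for j
      unfolding partial_def[of j "pbracket mu G H"] P_def D1_def D2_def
      by (rule DERIV_imp_deriv, rule pbracket_deriv[OF x that dPi])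
    then show ?thesis unfolding pbracket_sum[of mu F] P_def D1_def by simp
  qed
  have hessian_sym: "D2 F a b = D2 F b a" if "Ck_on 2 U F" for F a b
    unfolding D2_def by (rule partials_commute[OF U x that])
  have skew: "P a b = - P b a" for a b unfolding P_def by (rule PiMat_skew)
  have "schouten P dP i a b + schouten P dP a b i + schouten P dP b i a = 0" for i a b
    unfolding P_def by (rule cyclic)
  then show ?thesis
    unfolding nested[OF g h] nested[OF h f] nested[OF f g]
    by (rule jacobi_from_schouten[OF skew hessian_sym[OF f] hessian_sym[OF g] hessian_sym[OF h]])
qed


section \<open>The structure matrix for \<open>\<mu> = (0, 0, M\<cdot>\<gamma>/\<gamma>\<^sub>3)\<close>\<close>

text \<open>\<open>\<Pi>\<^sub>\<mu>\<close> for a \<open>\<mu>\<close> whose only nonzero component is the third one, written in terms of the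
  coordinates \<open>c\<close> of the point and the value \<open>m\<close> of \<open>\<mu>\<^sub>3\<close>.\<close>

definition Pmat :: "(6 \<Rightarrow> real) \<Rightarrow> real \<Rightarrow> real^6^6" where
  "Pmat c m = vector [vector [0, - c 3 - m, c 2, 0, - c 6, c 5],
     vector [c 3 + m, 0, - c 1, c 6, 0, - c 4],
     vector [- c 2, c 1, 0, - c 5, c 4, 0],
     vector [0, - c 6, c 5, 0, 0, 0],
     vector [c 6, 0, - c 4, 0, 0, 0],
     vector [- c 5, c 4, 0, 0, 0, 0]]"

lemma Pmat_entries:
  "Pmat c m $ 1 $ 1 = 0"  "Pmat c m $ 1 $ 2 = - c 3 - m"  "Pmat c m $ 1 $ 3 = c 2"
  "Pmat c m $ 1 $ 4 = 0"  "Pmat c m $ 1 $ 5 = - c 6"  "Pmat c m $ 1 $ 6 = c 5"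
  "Pmat c m $ 2 $ 1 = c 3 + m"  "Pmat c m $ 2 $ 2 = 0"  "Pmat c m $ 2 $ 3 = - c 1"
  "Pmat c m $ 2 $ 4 = c 6"  "Pmat c m $ 2 $ 5 = 0"  "Pmat c m $ 2 $ 6 = - c 4"
  "Pmat c m $ 3 $ 1 = - c 2"  "Pmat c m $ 3 $ 2 = c 1"  "Pmat c m $ 3 $ 3 = 0"
  "Pmat c m $ 3 $ 4 = - c 5"  "Pmat c m $ 3 $ 5 = c 4"  "Pmat c m $ 3 $ 6 = 0"
  "Pmat c m $ 4 $ 1 = 0"  "Pmat c m $ 4 $ 2 = - c 6"  "Pmat c m $ 4 $ 3 = c 5"
  "Pmat c m $ 4 $ 4 = 0"  "Pmat c m $ 4 $ 5 = 0"  "Pmat c m $ 4 $ 6 = 0"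
  "Pmat c m $ 5 $ 1 = c 6"  "Pmat c m $ 5 $ 2 = 0"  "Pmat c m $ 5 $ 3 = - c 4"
  "Pmat c m $ 5 $ 4 = 0"  "Pmat c m $ 5 $ 5 = 0"  "Pmat c m $ 5 $ 6 = 0"
  "Pmat c m $ 6 $ 1 = - c 5"  "Pmat c m $ 6 $ 2 = c 4"  "Pmat c m $ 6 $ 3 = 0"
  "Pmat c m $ 6 $ 4 = 0"  "Pmat c m $ 6 $ 5 = 0"  "Pmat c m $ 6 $ 6 = 0"
  by (simp_all add: Pmat_def vector_def)

lemma Pmat_deriv:
  assumes c: "\<And>k. ((\<lambda>t. c t k) has_real_derivative c' k) F" and m: "(m has_real_derivative m') F"
  shows "((\<lambda>t. Pmat (c t) (m t) $ a $ b) has_real_derivative Pmat c' m' $ a $ b) F"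
  using exhaust_6[of a] exhaust_6[of b]
  by (elim disjE) (auto simp: Pmat_entries intro!: derivative_eq_intros c m)

lemma Pmat_linear:
  "(\<Sum>j\<in>UNIV. w j * Pmat (c j) (m j) $ a $ b)
     = Pmat (\<lambda>k. \<Sum>j\<in>UNIV. w j * c j k) (\<Sum>j\<in>UNIV. w j * m j) $ a $ b"
  using exhaust_6[of a] exhaust_6[of b]
  by (elim disjE)
     (auto simp: Pmat_entries sum_negf[symmetric] sum.distrib[symmetric] algebra_simps sum_distrib_left)

definition mu3 :: "(6 \<Rightarrow> real) \<Rightarrow> real" where
  "mu3 c = (c 1 * c 4 + c 2 * c 5 + c 3 * c 6) / c 6"

definition grad_mu3 :: "(6 \<Rightarrow> real) \<Rightarrow> 6 \<Rightarrow> real" where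
  "grad_mu3 c k = (vector [c 4 / c 6, c 5 / c 6, 1, c 1 / c 6, c 2 / c 6,
                           - (c 1 * c 4 + c 2 * c 5) / (c 6 * c 6)] :: real^6) $ k"

lemma PiMat_eq_Pmat:
  assumes mu: "\<And>x. mu x = vector [0, 0, (Mc x \<bullet> gc x) / (gc x)$3]"
  shows "PiMat mu y = Pmat (\<lambda>k. y $ k) (mu3 (\<lambda>k. y $ k))"
  unfolding PiMat_def Let_def Pmat_def mu Mc_def gc_def mu3_def
  by (simp add: inner_vec_def sum_3 vector_3)

lemma mu3_deriv:
  assumes "x $ 6 \<noteq> 0"
  shows "((\<lambda>t. mu3 (\<lambda>k. (x + t *\<^sub>R axis j 1) $ k)) has_real_derivative grad_mu3 (\<lambda>k. x $ k) j) (at 0)"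
proof -
  let ?v = "axis j 1 :: real^6"
  have "((\<lambda>t. mu3 (\<lambda>k. (x + t *\<^sub>R ?v) $ k)) has_real_derivative
     (((?v $ 1 * x $ 4 + x $ 1 * ?v $ 4) + (?v $ 2 * x $ 5 + x $ 2 * ?v $ 5)
       + (?v $ 3 * x $ 6 + x $ 3 * ?v $ 6)) * x $ 6
      - (x $ 1 * x $ 4 + x $ 2 * x $ 5 + x $ 3 * x $ 6) * ?v $ 6) / (x $ 6 * x $ 6)) (at 0)"
    unfolding mu3_def using assms
    by (auto intro!: derivative_eq_intros coord_deriv simp: power2_eq_square algebra_simps)
  moreover have "(((?v $ 1 * x $ 4 + x $ 1 * ?v $ 4) + (?v $ 2 * x $ 5 + x $ 2 * ?v $ 5)
       + (?v $ 3 * x $ 6 + x $ 3 * ?v $ 6)) * x $ 6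
      - (x $ 1 * x $ 4 + x $ 2 * x $ 5 + x $ 3 * x $ 6) * ?v $ 6) / (x $ 6 * x $ 6)
     = grad_mu3 (\<lambda>k. x $ k) j"
    using exhaust_6[of j] assms
    by (elim disjE) (simp_all add: grad_mu3_def vector_def axis_def field_simps)
  ultimately show ?thesis by simp
qed

lemma PiMat_deriv:
  assumes mu: "\<And>x. mu x = vector [0, 0, (Mc x \<bullet> gc x) / (gc x)$3]" and x6: "x $ 6 \<noteq> 0"
  shows "((\<lambda>t. PiMat mu (x + t *\<^sub>R axis j 1) $ a $ b) has_real_derivative
           Pmat (\<lambda>k. axis j 1 $ k) (grad_mu3 (\<lambda>k. x $ k) j) $ a $ b) (at 0)"
  unfolding PiMat_eq_Pmat[OF mu]
  by (rule Pmat_deriv[OF coord_deriv mu3_deriv[OF x6]])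

text \<open>By linearity of \<open>Pmat\<close>, \<open>S\<^sub>i\<^sub>a\<^sub>b\<close> is itself an entry of a \<open>Pmat\<close>, which makes the check a finite
  rational identity.\<close>

lemma schouten_cyclic_vanishes:
  assumes mu: "\<And>x. mu x = vector [0, 0, (Mc x \<bullet> gc x) / (gc x)$3]" and x6: "x $ 6 \<noteq> 0"
  defines "P \<equiv> \<lambda>a b. PiMat mu x $ a $ b"
      and "dP \<equiv> \<lambda>j a b. Pmat (\<lambda>k. axis j 1 $ k) (grad_mu3 (\<lambda>k. x $ k) j) $ a $ b"
  shows "schouten P dP i a b + schouten P dP a b i + schouten P dP b i a = 0"
proof -
  define c where "c = (\<lambda>k. x $ k)"
  have axis_sum: "(\<Sum>j\<in>UNIV. P i j * axis j 1 $ k) = P i k" for i k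
    by (simp add: axis_def if_distrib[of "\<lambda>z. P i _ * z"] cong: if_cong)
  have S: "schouten P dP i a b
      = Pmat (\<lambda>k. Pmat c (mu3 c) $ i $ k) (\<Sum>k\<in>UNIV. Pmat c (mu3 c) $ i $ k * grad_mu3 c k) $ a $ b"
    for i a b
    unfolding schouten_def dP_def Pmat_linear axis_sum
    by (simp add: P_def c_def PiMat_eq_Pmat[OF mu])
  have "c 6 \<noteq> 0" using x6 by (simp add: c_def)
  then have "\<forall>i a b. schouten P dP i a b + schouten P dP a b i + schouten P dP b i a = 0"
    unfolding S forall_6
    by (simp add: Pmat_entries sum_6 grad_mu3_def vector_def mu3_def field_simps)
  then show ?thesis by blast
qed

lemma poisson:
  assumes U: "U = {x. (gc x)$3 \<noteq> 0}"
      and mu: "\<And>x. mu x = vector [0, 0, (Mc x \<bullet> gc x) / (gc x)$3]"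
  shows "is_poisson_on U mu"
  unfolding is_poisson_on_def
proof (intro allI impI ballI)
  fix f g h x
  assume "smooth_on U f \<and> smooth_on U g \<and> smooth_on U h" and x: "x \<in> U"
  then have "Ck_on 2 U f" "Ck_on 2 U g" "Ck_on 2 U h" unfolding smooth_on_def by blast+
  moreover have "open U" unfolding U by (simp add: gc_def vector_3) (intro open_Collect_neq continuous_intros)
  moreover have "x $ 6 \<noteq> 0" using U x by (simp add: gc_def vector_3)
  ultimately show "pbracket mu f (pbracket mu g h) x + pbracket mu g (pbracket mu h f) x
                   + pbracket mu h (pbracket mu f g) x = 0"
    using x by (intro jacobi_at_point[where dP = "\<lambda>j a b. Pmat (\<lambda>k. axis j 1 $ k) (grad_mu3 (\<lambda>k. x $ k) j) $ a $ b"]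
        PiMat_deriv[OF mu] schouten_cyclic_vanishes[OF mu])
qed


section \<open>The Casimir \<open>C = \<gamma>\<^sub>3 (M\<cdot>\<gamma>)\<close>\<close>

lemma C_poly:
  assumes C: "\<And>x. C x = (gc x)$3 * (Mc x \<bullet> gc x)"
  shows "C = (\<lambda>y. y $ 6 * (y $ 1 * y $ 4 + y $ 2 * y $ 5 + y $ 3 * y $ 6))"
  by (rule ext) (simp add: C gc_def Mc_def inner_vec_def sum_3 vector_3)

lemma C_partial:
  fixes i :: 6
  assumes C: "\<And>x. C x = (gc x)$3 * (Mc x \<bullet> gc x)"
  defines "v \<equiv> axis i 1 :: real^6"
  shows "grad C x $ i = v $ 6 * (x $ 1 * x $ 4 + x $ 2 * x $ 5 + x $ 3 * x $ 6)
      + x $ 6 * ((v $ 1 * x $ 4 + x $ 1 * v $ 4) + (v $ 2 * x $ 5 + x $ 2 * v $ 5) + (v $ 3 * x $ 6 + x $ 3 * v $ 6))"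
proof -
  have "((\<lambda>t. C (x + t *\<^sub>R v)) has_real_derivative
      v $ 6 * (x $ 1 * x $ 4 + x $ 2 * x $ 5 + x $ 3 * x $ 6)
      + x $ 6 * ((v $ 1 * x $ 4 + x $ 1 * v $ 4) + (v $ 2 * x $ 5 + x $ 2 * v $ 5) + (v $ 3 * x $ 6 + x $ 3 * v $ 6))) (at 0)"
    unfolding C_poly[OF C] by (auto intro!: derivative_eq_intros coord_deriv simp: algebra_simps)
  then show ?thesis unfolding grad_def partial_def v_def by (simp add: DERIV_imp_deriv)
qed

lemma casimir:
  assumes U: "U = {x. (gc x)$3 \<noteq> 0}"
      and mu: "\<And>x. mu x = vector [0, 0, (Mc x \<bullet> gc x) / (gc x)$3]"
      and C: "\<And>x. C x = (gc x)$3 * (Mc x \<bullet> gc x)"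
  shows "is_casimir_on U mu C"
  unfolding is_casimir_on_def
proof (intro conjI ballI)
  have "polyf (\<lambda>y::real^6. y $ 6 * (y $ 1 * y $ 4 + y $ 2 * y $ 5 + y $ 3 * y $ 6))"
    by (intro polyf.intros)
  then show "smooth_on U C" unfolding smooth_on_def C_poly[OF C] using polyf_Ck by blast
  fix x assume "x \<in> U"
  then have "x $ 6 \<noteq> 0" using U by (simp add: gc_def vector_3)
  then show "PiMat mu x *v grad C x = 0"
    unfolding vec_eq_iff forall_6 matrix_vector_mult_def PiMat_eq_Pmat[OF mu]
    by (simp add: C_partial[OF C] sum_6 Pmat_entries axis_def mu3_def field_simps)
qed


theorem mainTheorem13:
  fixes U :: "(real^6) set" and mu :: "real^6 \<Rightarrow> real^3" and C :: "real^6 \<Rightarrow> real"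
  assumes "U = {x. (gc x)$3 \<noteq> 0}"
      and "\<And>x. mu x = vector [0, 0, (Mc x \<bullet> gc x) / (gc x)$3]"
      and "\<And>x. C x = (gc x)$3 * (Mc x \<bullet> gc x)"
  shows "is_poisson_on U mu \<and> is_casimir_on U mu C"
  using poisson[OF assms(1,2)] casimir[OF assms] by blast

end
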